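(* Let $p\ge1$ and $n\ge p$ be integers. Then $S_{n,a}=S_{n+1,s}$. More precisely: - If $z$ is an odd eigenfunction of order $n$ with eigenvalue $\Lambda$, then $w(x)=\int_{-1}^x z(\xi)\,d\xi$ is an even eigenfunction of order $n+1$ with eigenvalue $\Lambda$. - Conversely, if $w$ is an even eigenfunction of order $n+1$ with eigenvalue $\Lambda$, then $w'$ is an odd eigenfunction of order $n$ with eigenvalue $\Lambda$.
   Context: Fix an integer $p\ge1$. For an integer $k\ge p$ and real $\Lambda$, the differential operator on $[-1,1]$ is $$L^{2k}(\Lambda)=(-1)^k\frac{d^{2k}}{dx^{2k}}-\Lambda(-1)^{k-p}\frac{d^{2k-2p}}{dx^{2k-2p}}.$$ A real number $\Lambda$ is an eigenvalue of order $k$ if there is a real $z\in C^{2k}[-1,1]$, $z\not\equiv0$, such that: - $L^{2k}(\Lambda)z=0$ on $[-1,1]$, and - $z^{(j)}(\pm1)=0$ for $j=0,\dots,k-1$. Such a $z$ is an eigenfunction of order $k$. $S_{k,s}$ (resp. $S_{k,a}$) is the set of eigenvalues of order $k$ admitting an even (resp. odd) eigenfunction of order $k$. *)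

theory Defs
  imports "HOL-Analysis.Analysis"
begin

fun dk :: "nat \<Rightarrow> (real \<Rightarrow> real) \<Rightarrow> real \<Rightarrow> real" where
  "dk 0 f = f"
| "dk (Suc j) f = (\<lambda>x. vector_derivative (dk j f) (at x within {-1..1}))"

definition Cm_on :: "nat \<Rightarrow> (real \<Rightarrow> real) \<Rightarrow> bool" where
  "Cm_on m f \<longleftrightarrow>
     (\<forall>j<m. \<forall>x\<in>{-1..1}. (dk j f has_vector_derivative dk (Suc j) f x) (at x within {-1..1}))
     \<and> continuous_on {-1..1} (dk m f)"

definition eigenfun :: "nat \<Rightarrow> nat \<Rightarrow> real \<Rightarrow> (real \<Rightarrow> real) \<Rightarrow> bool" where
  "eigenfun p k Lam z \<longleftrightarrow>
     p \<le> k \<and> Cm_on (2*k) z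
     \<and> (\<forall>x\<in>{-1..1}. (-1)^k * dk (2*k) z x - Lam * (-1)^(k-p) * dk (2*k-2*p) z x = 0)
     \<and> (\<forall>j<k. dk j z (-1) = 0 \<and> dk j z 1 = 0)
     \<and> (\<exists>x\<in>{-1..1}. z x \<noteq> 0)"

definition even_on :: "(real \<Rightarrow> real) \<Rightarrow> bool" where
  "even_on z \<longleftrightarrow> (\<forall>x\<in>{-1..1}. z (-x) = z x)"

definition odd_on :: "(real \<Rightarrow> real) \<Rightarrow> bool" where
  "odd_on z \<longleftrightarrow> (\<forall>x\<in>{-1..1}. z (-x) = - z x)"

definition S_s :: "nat \<Rightarrow> nat \<Rightarrow> real set" where
  "S_s p k = {Lam. \<exists>z. eigenfun p k Lam z \<and> even_on z}"

definition S_a :: "nat \<Rightarrow> nat \<Rightarrow> real set" where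
  "S_a p k = {Lam. \<exists>z. eigenfun p k Lam z \<and> odd_on z}"

end

theory Submission
  imports Defs
begin

text \<open>Integration and differentiation shift the order of the problem by one, because for any
  w in C^(2n+2)[-1,1] the residual L^(2n+2)(\<Lambda>) w is minus the derivative of L^(2n)(\<Lambda>) w'.
  If w is an even eigenfunction of order n+1, then L^(2n)(\<Lambda>) w' is therefore constant; it only
  involves odd-order derivatives of w, so it is odd and hence zero. Conversely, if z is an odd
  eigenfunction of order n and w = \<integral>z, then L^(2n+2)(\<Lambda>) w = -(L^(2n)(\<Lambda>) z)' = 0; w is even because
  w' = z is odd, so w(1) = w(-1) = 0. The extra smoothness of w comes from the equation itself:
  z^(2n) is a multiple of z^(2n-2p), which is C^1 as p \<ge> 1.\<close>

abbreviation II :: "real set" where "II \<equiv> {-1..1}"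

lemma vector_derivative_within_II:
  assumes "x \<in> II" "(f has_vector_derivative D) (at x within II)"
  shows "vector_derivative f (at x within II) = D"
  using vector_derivative_within_cbox[of "-1" 1 x f D] assms by (simp add: box_real(2))

lemma has_vector_derivative_within_II_cong:
  assumes "x \<in> II" "\<And>y. y \<in> II \<Longrightarrow> f y = g y"
  shows "(f has_vector_derivative D) (at x within II) \<longleftrightarrow> (g has_vector_derivative D) (at x within II)"
  using has_vector_derivative_transform[of x II f g D] has_vector_derivative_transform[of x II g f D] assms
  by metis

lemma dk_cong:
  assumes "\<And>y. y \<in> II \<Longrightarrow> f y = g y" "x \<in> II"
  shows "dk j f x = dk j g x"
  using assms(2)
proof (induction j arbitrary: x)
  case (Suc j)
  then show ?case
    using has_vector_derivative_within_II_cong[of x "dk j f" "dk j g"] by (simp add: vector_derivative_def)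
qed (use assms in simp)

lemma dk_Suc_right: "dk (Suc j) f = dk j (dk 1 f)"
  by (induction j) auto

declare dk.simps(2) [simp del]

lemma dk_1_eq_derivative:
  assumes "x \<in> II" "(f has_vector_derivative D) (at x within II)"
  shows "dk 1 f x = D"
  using vector_derivative_within_II[OF assms] by (simp add: dk.simps)

lemma constant_on_II_if_derivative_zero:
  assumes "\<And>x. x \<in> II \<Longrightarrow> (f has_vector_derivative 0) (at x within II)" "x \<in> II" "y \<in> II"
  shows "f x = f y"
proof -
  obtain c where "\<And>x. x \<in> II \<Longrightarrow> f x = c"
    using has_vector_derivative_zero_constant[of II f] assms(1) by auto
  then show ?thesis using assms(2,3) by metis
qed

lemma Cm_on_Suc_iff:
  "Cm_on (Suc m) f \<longleftrightarrow>
     (\<forall>x\<in>II. (f has_vector_derivative dk 1 f x) (at x within II)) \<and> Cm_on m (dk 1 f)"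
  unfolding Cm_on_def dk_Suc_right[symmetric] by (auto simp: less_Suc_eq_0_disj)

lemma Cm_on_SucI:
  assumes "Cm_on m f"
    and "\<And>x. x \<in> II \<Longrightarrow> (dk m f has_vector_derivative dk (Suc m) f x) (at x within II)"
    and "continuous_on II (dk (Suc m) f)"
  shows "Cm_on (Suc m) f"
  using assms unfolding Cm_on_def by (metis less_Suc_eq)

lemma Cm_on_cong:
  assumes "\<And>y. y \<in> II \<Longrightarrow> f y = g y" "Cm_on m f"
  shows "Cm_on m g"
proof -
  have eq: "dk j g x = dk j f x" if "x \<in> II" for j x
    using dk_cong[OF assms(1) that] by simp
  show ?thesis
    using assms(2) continuous_on_eq[of II "dk m f" "dk m g"] eq
      has_vector_derivative_within_II_cong[of _ "dk _ f" "dk _ g"]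
    unfolding Cm_on_def by metis
qed

lemma Cm_on_continuous: "Cm_on m f \<Longrightarrow> j \<le> m \<Longrightarrow> continuous_on II (dk j f)"
  unfolding Cm_on_def
  by (metis continuous_on_eq_continuous_within has_vector_derivative_continuous le_neq_implies_less)

lemma Cm_on_mono: "Cm_on m f \<Longrightarrow> k \<le> m \<Longrightarrow> Cm_on k f"
  using Cm_on_continuous[of m f k] unfolding Cm_on_def by auto

lemma has_vector_derivative_reflect_II:
  fixes f f' :: "real \<Rightarrow> real"
  assumes "\<And>y. y \<in> II \<Longrightarrow> (f has_vector_derivative f' y) (at y within II)" "x \<in> II"
  shows "((\<lambda>x. f (-x)) has_vector_derivative - f' (-x)) (at x within II)"
proof -
  have "(uminus has_vector_derivative (-1)) (at x within II)"
    by (auto intro!: derivative_eq_intros)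
  moreover have "uminus ` II = II" by auto
  then have "(f has_vector_derivative f' (-x)) (at (-x) within uminus ` II)"
    using assms by auto
  ultimately have "((f \<circ> uminus) has_vector_derivative ((-1) *\<^sub>R f' (-x))) (at x within II)"
    by (rule vector_diff_chain_within)
  then show ?thesis by (simp add: o_def)
qed

lemma derivative_parity:
  fixes f f' :: "real \<Rightarrow> real"
  assumes "\<And>y. y \<in> II \<Longrightarrow> (f has_vector_derivative f' y) (at y within II)"
    and "\<And>y. y \<in> II \<Longrightarrow> f (-y) = s * f y" "x \<in> II"
  shows "f' (-x) = - s * f' x"
proof -
  have "((\<lambda>x. s * f x) has_vector_derivative s * f' x) (at x within II)"
    using assms(1)[OF assms(3)] by (rule has_vector_derivative_mult_right)
  then have "((\<lambda>x. f (-x)) has_vector_derivative s * f' x) (at x within II)"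
    using has_vector_derivative_within_II_cong[of x "\<lambda>x. f (-x)" "\<lambda>x. s * f x"] assms(2,3) by auto
  with has_vector_derivative_reflect_II[OF assms(1,3)] have "- f' (-x) = s * f' x"
    using vector_derivative_within_II[OF assms(3)] by metis
  then show ?thesis by simp
qed

lemma dk_parity:
  assumes "Cm_on m f" "\<And>y. y \<in> II \<Longrightarrow> f (-y) = s * f y" "j \<le> m" "x \<in> II"
  shows "dk j f (-x) = s * (-1)^j * dk j f x"
  using assms(3,4)
proof (induction j arbitrary: x)
  case (Suc j)
  have "\<And>y. y \<in> II \<Longrightarrow> (dk j f has_vector_derivative dk (Suc j) f y) (at y within II)"
    using assms(1) Suc.prems unfolding Cm_on_def by auto
  from derivative_parity[OF this _ Suc.prems(2)] Suc show ?case by simp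
qed (use assms in simp)

lemma even_on_if_derivative_odd:
  assumes "\<And>x. x \<in> II \<Longrightarrow> (f has_vector_derivative f' x) (at x within II)" "odd_on f'"
  shows "even_on f"
  unfolding even_on_def
proof
  fix x :: real assume "x \<in> II"
  have "((\<lambda>x. f x - f (-x)) has_vector_derivative 0) (at y within II)" if "y \<in> II" for y
  proof -
    have "((\<lambda>x. f x - f (-x)) has_vector_derivative f' y - - f' (-y)) (at y within II)"
      using assms(1) that by (intro has_vector_derivative_diff has_vector_derivative_reflect_II)
    with assms(2) that show ?thesis unfolding odd_on_def by simp
  qed
  from constant_on_II_if_derivative_zero[OF this \<open>x \<in> II\<close>, of 0] show "f (-x) = f x" by simp
qed

lemma odd_on_vanishes_if_derivative_zero:
  assumes "\<And>x. x \<in> II \<Longrightarrow> (f has_vector_derivative 0) (at x within II)" "odd_on f" "x \<in> II"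
  shows "f x = 0"
  using constant_on_II_if_derivative_zero[OF assms(1,3), of 0] assms(2)[unfolded odd_on_def, rule_format, of 0]
  by simp

text \<open>(L^(2k)(\<Lambda>) z)(x) in the notation of the header.\<close>

definition eigen_residual :: "nat \<Rightarrow> nat \<Rightarrow> real \<Rightarrow> (real \<Rightarrow> real) \<Rightarrow> real \<Rightarrow> real" where
  "eigen_residual p k Lam z x = (-1)^k * dk (2*k) z x - Lam * (-1)^(k-p) * dk (2*k-2*p) z x"

lemma eigenfun_iff:
  "eigenfun p k Lam z \<longleftrightarrow>
     p \<le> k \<and> Cm_on (2*k) z \<and> (\<forall>x\<in>II. eigen_residual p k Lam z x = 0)
     \<and> (\<forall>j<k. dk j z (-1) = 0 \<and> dk j z 1 = 0) \<and> (\<exists>x\<in>II. z x \<noteq> 0)"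
  unfolding eigenfun_def eigen_residual_def by simp

lemma eigen_residual_dk_1:
  "eigen_residual p n Lam (dk 1 w) x =
     (-1)^n * dk (Suc (2*n)) w x - Lam * (-1)^(n-p) * dk (Suc (2*n-2*p)) w x"
  unfolding eigen_residual_def dk_Suc_right ..

lemma has_vector_derivative_eigen_residual_dk_1:
  assumes "p \<le> n" "Cm_on (2 * Suc n) w" "x \<in> II"
  shows "(eigen_residual p n Lam (dk 1 w) has_vector_derivative - eigen_residual p (Suc n) Lam w x)
           (at x within II)"
proof -
  have d: "(dk j w has_vector_derivative dk (Suc j) w x) (at x within II)" if "j \<le> Suc (2*n)" for j
    using assms(2,3) that unfolding Cm_on_def by auto
  have "((\<lambda>y. (-1)^n * dk (Suc (2*n)) w y - Lam * (-1)^(n-p) * dk (Suc (2*n-2*p)) w y)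
          has_vector_derivative
          (-1)^n * dk (Suc (Suc (2*n))) w x - Lam * (-1)^(n-p) * dk (Suc (Suc (2*n-2*p))) w x)
        (at x within II)"
    by (intro has_vector_derivative_diff has_vector_derivative_mult_right d) auto
  moreover have "2 * Suc n - 2*p = Suc (Suc (2*n-2*p))" "Suc n - p = Suc (n-p)"
    using assms(1) by auto
  ultimately show ?thesis
    unfolding eigen_residual_dk_1 by (simp add: eigen_residual_def)
qed

lemma eigenfun_Cm_on_Suc:
  assumes "1 \<le> p" "eigenfun p k Lam z"
  shows "Cm_on (Suc (2*k)) z"
proof -
  have Cz: "Cm_on (2*k) z" and res: "\<And>x. x \<in> II \<Longrightarrow> eigen_residual p k Lam z x = 0"
    using assms(2) unfolding eigenfun_iff by auto
  define c where "c = Lam * (-1)^k * (-1)^(k-p)"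
  have sq: "((-1::real)^k) * (-1)^k = 1" by (simp add: power_mult_distrib[symmetric])
  have rel: "dk (2*k) z x = c * dk (2*k-2*p) z x" if "x \<in> II" for x
  proof -
    have "(-1)^k * ((-1)^k * dk (2*k) z x) = (-1)^k * (Lam * (-1)^(k-p) * dk (2*k-2*p) z x)"
      using res[OF that] unfolding eigen_residual_def by simp
    then show ?thesis unfolding c_def using sq by (simp add: mult.assoc[symmetric])
  qed
  have lower: "Suc (2*k-2*p) \<le> 2*k" using assms eigenfun_def by auto
  have d: "(dk (2*k) z has_vector_derivative c * dk (Suc (2*k-2*p)) z x) (at x within II)"
    if "x \<in> II" for x
  proof -
    have "((\<lambda>x. c * dk (2*k-2*p) z x) has_vector_derivative c * dk (Suc (2*k-2*p)) z x) (at x within II)"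
      using Cz lower that unfolding Cm_on_def by (intro has_vector_derivative_mult_right) auto
    then show ?thesis
      using has_vector_derivative_within_II_cong[OF that, of "dk (2*k) z"] rel by simp
  qed
  have top: "dk (Suc (2*k)) z x = c * dk (Suc (2*k-2*p)) z x" if "x \<in> II" for x
    using vector_derivative_within_II[OF that d[OF that]] by (simp add: dk.simps)
  have "continuous_on II (\<lambda>x. c * dk (Suc (2*k-2*p)) z x)"
    by (intro continuous_intros Cm_on_continuous[OF Cz lower])
  then show ?thesis
    using Cm_on_SucI[OF Cz] d top continuous_on_eq[of II _ "dk (Suc (2*k)) z"] by simp
qed

lemma eigenfun_dk_1_odd:
  assumes "p \<le> n" "eigenfun p (Suc n) Lam w" "even_on w"
  shows "eigenfun p n Lam (dk 1 w) \<and> odd_on (dk 1 w)"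
proof -
  have Cw: "Cm_on (2 * Suc n) w" and resw: "\<And>x. x \<in> II \<Longrightarrow> eigen_residual p (Suc n) Lam w x = 0"
    and bw: "\<And>j. j < Suc n \<Longrightarrow> dk j w (-1) = 0 \<and> dk j w 1 = 0" and nzw: "\<exists>x\<in>II. w x \<noteq> 0"
    using assms(2) unfolding eigenfun_iff by auto
  have par: "dk j w (-x) = (-1)^j * dk j w x" if "j \<le> 2 * Suc n" "x \<in> II" for j x
    using dk_parity[OF Cw _ that, of 1] assms(3) unfolding even_on_def by simp
  have dw: "(w has_vector_derivative dk 1 w x) (at x within II)" if "x \<in> II" for x
    using Cw that by (simp add: Cm_on_Suc_iff)
  have res_odd: "odd_on (eigen_residual p n Lam (dk 1 w))"
    unfolding odd_on_def eigen_residual_dk_1 using par by simp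
  have res_const: "(eigen_residual p n Lam (dk 1 w) has_vector_derivative 0) (at x within II)"
    if "x \<in> II" for x
    using has_vector_derivative_eigen_residual_dk_1[OF assms(1) Cw that, of Lam] resw[OF that] by simp
  have res: "eigen_residual p n Lam (dk 1 w) x = 0" if "x \<in> II" for x
    using odd_on_vanishes_if_derivative_zero[OF res_const res_odd that] .
  have "Cm_on (2*n) (dk 1 w)"
    using Cw Cm_on_mono[of "Suc (2*n)" "dk 1 w"] by (simp add: Cm_on_Suc_iff)
  moreover have "dk j (dk 1 w) (-1) = 0 \<and> dk j (dk 1 w) 1 = 0" if "j < n" for j
    using bw[of "Suc j"] that unfolding dk_Suc_right by simp
  moreover have "\<exists>x\<in>II. dk 1 w x \<noteq> 0"
  proof (rule ccontr)
    assume "\<not> ?thesis"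
    then have "w x = w (-1)" if "x \<in> II" for x
      using constant_on_II_if_derivative_zero[of w x "-1"] dw that by fastforce
    moreover have "w (-1) = 0" using bw[of 0] by simp
    ultimately show False using nzw by metis
  qed
  moreover have "odd_on (dk 1 w)"
    unfolding odd_on_def using par[of 1] by simp
  ultimately show ?thesis
    unfolding eigenfun_iff using assms(1) res by blast
qed

lemma eigenfun_integral_even:
  assumes "1 \<le> p" "eigenfun p n Lam z" "odd_on z"
  shows "eigenfun p (Suc n) Lam (\<lambda>x. integral {-1..x} z) \<and> even_on (\<lambda>x. integral {-1..x} z)"
proof -
  define w where "w = (\<lambda>x. integral {-1..x} z)"
  have pn: "p \<le> n" and Cz: "Cm_on (2*n) z" and resz: "\<And>x. x \<in> II \<Longrightarrow> eigen_residual p n Lam z x = 0"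
    and bz: "\<And>j. j < n \<Longrightarrow> dk j z (-1) = 0 \<and> dk j z 1 = 0" and nzz: "\<exists>x\<in>II. z x \<noteq> 0"
    using assms(2) unfolding eigenfun_iff by auto
  have hw: "(w has_vector_derivative z x) (at x within II)" if "x \<in> II" for x
    unfolding w_def using Cm_on_continuous[OF Cz, of 0] that
    by (intro integral_has_vector_derivative) auto
  have w': "dk 1 w x = z x" if "x \<in> II" for x
    using dk_1_eq_derivative[OF that hw[OF that]] .
  have dkw: "dk (Suc j) w x = dk j z x" if "x \<in> II" for j x
    unfolding dk_Suc_right using dk_cong[OF w' that] .
  have Cw: "Cm_on (2 * Suc n) w"
    using Cm_on_cong[OF _ eigenfun_Cm_on_Suc[OF assms(1,2)], of "dk 1 w"] w' hw
    by (simp add: Cm_on_Suc_iff)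
  have resw: "eigen_residual p (Suc n) Lam w x = 0" if "x \<in> II" for x
  proof -
    have "eigen_residual p n Lam (dk 1 w) y = 0" if "y \<in> II" for y
      using resz[OF that] dk_cong[OF w' that] by (simp add: eigen_residual_def)
    then have "(eigen_residual p n Lam (dk 1 w) has_vector_derivative 0) (at x within II)"
      by (subst has_vector_derivative_within_II_cong[OF \<open>x \<in> II\<close>, where g="\<lambda>_. 0"])
        (auto intro: has_vector_derivative_const)
    with has_vector_derivative_eigen_residual_dk_1[OF pn Cw that] show ?thesis
      using vector_derivative_within_II[OF that] by (metis neg_equal_0_iff_equal)
  qed
  have ev: "even_on w"
    using even_on_if_derivative_odd[OF hw assms(3)] .
  have w_left: "w (-1) = 0" unfolding w_def by simp
  moreover have "w 1 = 0" using ev[unfolded even_on_def, rule_format, of 1] w_left by simp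
  ultimately have "dk j w (-1) = 0 \<and> dk j w 1 = 0" if "j < Suc n" for j
    using bz dkw that by (cases j) auto
  moreover have "\<exists>x\<in>II. w x \<noteq> 0"
  proof (rule ccontr)
    assume "\<not> ?thesis"
    then have "dk 1 w x = dk 1 (\<lambda>_. 0) x" if "x \<in> II" for x
      using dk_cong[of w "\<lambda>_. 0", OF _ that] by auto
    moreover have "dk 1 (\<lambda>_. 0) x = 0" if "x \<in> II" for x
      using dk_1_eq_derivative[OF that, of "\<lambda>_. 0" 0] by simp
    ultimately show False using nzz w' by auto
  qed
  ultimately show ?thesis
    unfolding w_def[symmetric] eigenfun_iff using pn Cw resw ev by auto
qed

theorem mainTheorem6:
  fixes p n :: nat
  assumes "1 \<le> p" and "p \<le> n"
  shows "S_a p n = S_s p (Suc n)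
    \<and> (\<forall>Lam z. eigenfun p n Lam z \<and> odd_on z \<longrightarrow>
          eigenfun p (Suc n) Lam (\<lambda>x. integral {-1..x} z)
          \<and> even_on (\<lambda>x. integral {-1..x} z))
    \<and> (\<forall>Lam w. eigenfun p (Suc n) Lam w \<and> even_on w \<longrightarrow>
          eigenfun p n Lam (dk 1 w) \<and> odd_on (dk 1 w))"
proof -
  have integrate: "\<forall>Lam z. eigenfun p n Lam z \<and> odd_on z \<longrightarrow>
      eigenfun p (Suc n) Lam (\<lambda>x. integral {-1..x} z) \<and> even_on (\<lambda>x. integral {-1..x} z)"
    using eigenfun_integral_even[OF assms(1)] by blast
  have differentiate: "\<forall>Lam w. eigenfun p (Suc n) Lam w \<and> even_on w \<longrightarrow>
      eigenfun p n Lam (dk 1 w) \<and> odd_on (dk 1 w)"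
    using eigenfun_dk_1_odd[OF assms(2)] by blast
  have "S_a p n = S_s p (Suc n)"
    unfolding S_a_def S_s_def using integrate differentiate by blast
  with integrate differentiate show ?thesis by blast
qed

end
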